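(* Let $t,q\ge 0$ and $s_1,\dots,s_t\ge 2$ be integers, and let $G^*=K_1\vee (P_3\cup C_{s_1}\cup\cdots\cup C_{s_t}\cup qK_2)$, where $C_2$ denotes a digon, and let $n$ be the number of vertices of $G^*$. Then the least $Q$-eigenvalue satisfies $\sigma_n(G^* )<1$.
   Context: Multigraphs without loops are allowed: degree = number of incident edges; the $(u,v)$ entry of the adjacency matrix $A$ is the number of edges between $u$ and $v$; $C_2$ is the digon (two vertices joined by two parallel edges). $Q=A+D$ with $D$ the diagonal degree matrix, with eigenvalues $\sigma_1\ge\cdots\ge\sigma_n$. $P_3$ is the path on $3$ vertices; $K_1\vee H$ adds one vertex adjacent to all vertices of $H$; $\cup$ is disjoint union; $qK_2$ is $q$ disjoint edges. *)

theory Defs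
  imports "Jordan_Normal_Form.Char_Poly"
begin

text \<open>A loopless multigraph on vertex set {0..<n} is represented as a pair (n, E),
  where E is a list of (unordered) edges, each given as a pair of vertices;
  parallel edges are repeated list entries.\<close>

type_synonym mgraph = "nat \<times> (nat \<times> nat) list"

definition nverts :: "mgraph \<Rightarrow> nat" where
  "nverts G = fst G"

definition edges :: "mgraph \<Rightarrow> (nat \<times> nat) list" where
  "edges G = snd G"

definition mult :: "mgraph \<Rightarrow> nat \<Rightarrow> nat \<Rightarrow> nat" where
  "mult G u v = length (filter (\<lambda>e. e = (u, v) \<or> e = (v, u)) (edges G))"

definition degree :: "mgraph \<Rightarrow> nat \<Rightarrow> nat" where
  "degree G v = length (filter (\<lambda>e. fst e = v \<or> snd e = v) (edges G))"

definition adj_mat :: "mgraph \<Rightarrow> real mat" where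
  "adj_mat G = mat (nverts G) (nverts G) (\<lambda>(u, v). real (mult G u v))"

definition deg_mat :: "mgraph \<Rightarrow> real mat" where
  "deg_mat G = mat (nverts G) (nverts G) (\<lambda>(u, v). if u = v then real (degree G u) else 0)"

definition Q_mat :: "mgraph \<Rightarrow> real mat" where
  "Q_mat G = adj_mat G + deg_mat G"

definition least_eigenvalue :: "real mat \<Rightarrow> real" where
  "least_eigenvalue M = Min {k. eigenvalue M k}"

definition shift_edges :: "nat \<Rightarrow> (nat \<times> nat) list \<Rightarrow> (nat \<times> nat) list" where
  "shift_edges k E = map (\<lambda>(u, v). (u + k, v + k)) E"

definition dunion :: "mgraph \<Rightarrow> mgraph \<Rightarrow> mgraph" where
  "dunion G H = (nverts G + nverts H, edges G @ shift_edges (nverts G) (edges H))"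

definition dunion_list :: "mgraph list \<Rightarrow> mgraph" where
  "dunion_list Gs = foldr dunion Gs (0, [])"

text \<open>K_1 join H: new vertex 0 adjacent (by one edge) to every vertex of H.\<close>
definition cone :: "mgraph \<Rightarrow> mgraph" where
  "cone H = (nverts H + 1, shift_edges 1 (edges H) @ map (\<lambda>i. (0, i + 1)) [0..<nverts H])"

definition path3 :: mgraph where
  "path3 = (3, [(0, 1), (1, 2)])"

definition K2 :: mgraph where
  "K2 = (2, [(0, 1)])"

text \<open>Cycle C_s for s \<ge> 2; for s = 2 this yields edges (0,1),(1,0), i.e. the digon.\<close>
definition cycle :: "nat \<Rightarrow> mgraph" where
  "cycle s = (s, map (\<lambda>i. (i, (i + 1) mod s)) [0..<s])"

end

theory Submission
  imports Defs
begin

text \<open>Normalise a candidate eigenvector of Q(K_1 \<or> H) to the value 1 at the apex. At the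
  vertices of H the eigen-equations then say that its restriction y solves
  (Q_H - (\<lambda> - 1) I) y = -1, which decouples over the components of H; on K_2 and on cycles
  there is a constant solution, on P_3 one taking a value at the ends and another in the middle.
  What remains is the equation at the apex, a single scalar equation in \<lambda>. Multiplied by
  1 - \<lambda> it becomes continuous on [0, 1], positive at 0 and negative at 1, so it has a root
  \<lambda> in (0, 1), which is then an eigenvalue of Q(G*) and bounds \<sigma>_n(G*) from above.\<close>

text \<open>Entry i of Q v: an edge at i contributes v i through D and the value at its other end
  through A.\<close>
definition Q_apply :: "(nat \<times> nat) list \<Rightarrow> (nat \<Rightarrow> real) \<Rightarrow> nat \<Rightarrow> real" where
  "Q_apply E v i = (\<Sum>(x, y)\<leftarrow>E. if x = i then v i + v y else if y = i then v i + v x else 0)"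

definition wf_mgraph :: "mgraph \<Rightarrow> bool" where
  "wf_mgraph G \<longleftrightarrow> (\<forall>(x, y)\<in>set (edges G). x < nverts G \<and> y < nverts G)"

lemma Q_apply_Nil [simp]: "Q_apply [] v i = 0"
  by (simp add: Q_apply_def)

lemma Q_apply_Cons [simp]:
  "Q_apply ((x, y) # E) v i =
     (if x = i then v i + v y else if y = i then v i + v x else 0) + Q_apply E v i"
  by (simp add: Q_apply_def)

lemma Q_apply_append [simp]: "Q_apply (E @ F) v i = Q_apply E v i + Q_apply F v i"
  by (simp add: Q_apply_def)

lemma Q_apply_shift_edges:
  "Q_apply (shift_edges k E) v i = (if i < k then 0 else Q_apply E (\<lambda>j. v (j + k)) (i - k))"
  by (induction E) (auto simp: shift_edges_def)

lemma Q_apply_eq_0: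
  "\<forall>(x, y)\<in>set E. x < N \<and> y < N \<Longrightarrow> N \<le> i \<Longrightarrow> Q_apply E v i = 0"
  by (induction E) auto

lemma Q_apply_cong:
  "\<forall>(x, y)\<in>set E. x < N \<and> y < N \<Longrightarrow> \<forall>j<N. v j = w j \<Longrightarrow> i < N \<Longrightarrow>
   Q_apply E v i = Q_apply E w i"
  by (induction E) auto

lemma row_sum_single_edge:
  fixes v :: "nat \<Rightarrow> real"
  assumes "x < N" "y < N" "i < N"
  shows "(\<Sum>j<N. ((if (x, y) = (i, j) \<or> (x, y) = (j, i) then 1 else 0) +
            (if i = j then if x = i \<or> y = i then 1 else 0 else 0)) * v j)
       = (if x = i then v i + v y else if y = i then v i + v x else 0)"
proof -
  have "(\<Sum>j<N. ((if (x, y) = (i, j) \<or> (x, y) = (j, i) then 1 else 0) +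
            (if i = j then if x = i \<or> y = i then 1 else 0 else 0)) * v j)
      = (\<Sum>j<N. (if x = i \<and> j = y \<or> y = i \<and> j = x then v j else 0) +
                 (if j = i \<and> (x = i \<or> y = i) then v j else 0))"
    by (rule sum.cong) auto
  also have "\<dots> = (if x = i then v i + v y else if y = i then v i + v x else 0)"
    using assms
    by (cases "x = i"; cases "y = i") (simp_all add: sum.distrib sum_distrib_left[symmetric])
  finally show ?thesis .
qed

lemma mult_Cons:
  "mult (N, e # E) i j = (if e = (i, j) \<or> e = (j, i) then 1 else 0) + mult (N, E) i j"
  by (simp add: mult_def edges_def)

lemma degree_Cons:
  "degree (N, e # E) i = (if fst e = i \<or> snd e = i then 1 else 0) + degree (N, E) i"
  by (simp add: degree_def edges_def)

lemma row_sum_eq_Q_apply: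
  fixes v :: "nat \<Rightarrow> real"
  assumes "\<forall>(x, y)\<in>set E. x < N \<and> y < N" "i < N"
  shows "(\<Sum>j<N. (real (mult (N, E) i j) + (if i = j then real (degree (N, E) i) else 0)) * v j)
       = Q_apply E v i"
  using assms(1)
proof (induction E)
  case Nil
  then show ?case by (simp add: mult_def degree_def edges_def cong: if_cong)
next
  case (Cons e E)
  obtain x y where e: "e = (x, y)" by fastforce
  with Cons have xy: "x < N" "y < N" by auto
  have "(\<Sum>j<N. (real (mult (N, e # E) i j) + (if i = j then real (degree (N, e # E) i) else 0)) * v j)
      = (\<Sum>j<N. ((if (x, y) = (i, j) \<or> (x, y) = (j, i) then 1 else 0) +
            (if i = j then if x = i \<or> y = i then 1 else 0 else 0)) * v j +
          (real (mult (N, E) i j) + (if i = j then real (degree (N, E) i) else 0)) * v j)"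
    by (rule sum.cong) (auto simp: e mult_Cons degree_Cons algebra_simps)
  also have "\<dots> = Q_apply (e # E) v i"
    using Cons xy by (simp only: sum.distrib row_sum_single_edge[OF xy assms(2)]) (simp add: e)
  finally show ?case .
qed

lemma Q_mat_mult_vec_nth:
  assumes "wf_mgraph G" "i < nverts G"
  shows "(Q_mat G *\<^sub>v vec (nverts G) v) $ i = Q_apply (edges G) v i"
proof -
  have "(Q_mat G *\<^sub>v vec (nverts G) v) $ i = (\<Sum>j<nverts G. (real (mult G i j) +
            (if i = j then real (degree G i) else 0)) * v j)"
    using assms(2)
    by (simp add: Q_mat_def adj_mat_def deg_mat_def scalar_prod_def atLeast0LessThan algebra_simps)
  also have "\<dots> = Q_apply (edges G) v i"
    using row_sum_eq_Q_apply[of "edges G" "nverts G" i v] assms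
    unfolding wf_mgraph_def nverts_def edges_def prod.collapse by simp
  finally show ?thesis .
qed

lemma Q_mat_carrier: "Q_mat G \<in> carrier_mat (nverts G) (nverts G)"
  by (simp add: Q_mat_def adj_mat_def deg_mat_def)

lemma eigenvalue_Q_matI:
  assumes "wf_mgraph G"
    and "\<forall>i<nverts G. Q_apply (edges G) v i = lam * v i"
    and "i < nverts G" "v i \<noteq> 0"
  shows "eigenvalue (Q_mat G) lam"
proof -
  let ?n = "nverts G"
  have dim: "Q_mat G \<in> carrier_mat ?n ?n"
    by (rule Q_mat_carrier)
  have "Q_mat G *\<^sub>v vec ?n v = lam \<cdot>\<^sub>v vec ?n v"
  proof (rule eq_vecI)
    fix j
    assume "j < dim_vec (lam \<cdot>\<^sub>v vec ?n v)"
    then have j: "j < ?n" by simp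
    have "(Q_mat G *\<^sub>v vec ?n v) $ j = Q_apply (edges G) v j"
      by (rule Q_mat_mult_vec_nth[OF assms(1) j])
    also have "\<dots> = (lam \<cdot>\<^sub>v vec ?n v) $ j"
      using assms(2) j by simp
    finally show "(Q_mat G *\<^sub>v vec ?n v) $ j = (lam \<cdot>\<^sub>v vec ?n v) $ j" .
  qed (use dim in simp)
  moreover have "vec ?n v \<noteq> 0\<^sub>v ?n"
    using assms(3,4) by (metis index_vec index_zero_vec(1))
  ultimately show ?thesis
    unfolding eigenvalue_def eigenvector_def using dim by (intro exI[of _ "vec ?n v"]) auto
qed

lemma least_eigenvalue_le:
  assumes "A \<in> carrier_mat n n" "eigenvalue A k"
  shows "least_eigenvalue A \<le> k"
proof -
  have "char_poly A \<noteq> 0"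
    using degree_monic_char_poly[OF assms(1)] by auto
  then have "finite {k. eigenvalue A k}"
    using eigenvalue_root_char_poly[OF assms(1)] poly_roots_finite by auto
  then show ?thesis
    unfolding least_eigenvalue_def using assms(2) by (auto intro: Min_le)
qed

lemma nverts_dunion [simp]: "nverts (dunion G H) = nverts G + nverts H"
  by (simp add: dunion_def nverts_def)

lemma edges_dunion [simp]: "edges (dunion G H) = edges G @ shift_edges (nverts G) (edges H)"
  by (simp add: dunion_def edges_def)

lemma shift_edges_0 [simp]: "shift_edges 0 E = E"
  by (induction E) (auto simp: shift_edges_def)

lemma shift_edges_append [simp]: "shift_edges k (E @ F) = shift_edges k E @ shift_edges k F"
  by (simp add: shift_edges_def)

lemma shift_edges_shift_edges [simp]: "shift_edges k (shift_edges m E) = shift_edges (m + k) E"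
  by (induction E) (auto simp: shift_edges_def)

lemma dunion_empty [simp]: "dunion (0, []) G = G"
  by (simp add: dunion_def nverts_def edges_def)

lemma dunion_assoc: "dunion (dunion G H) K = dunion G (dunion H K)"
  by (simp add: dunion_def nverts_def edges_def add.assoc add.commute)

lemma dunion_list_Nil [simp]: "dunion_list [] = (0, [])"
  by (simp add: dunion_list_def)

lemma dunion_list_Cons [simp]: "dunion_list (G # Gs) = dunion G (dunion_list Gs)"
  by (simp add: dunion_list_def)

lemma dunion_list_append: "dunion_list (Gs @ Hs) = dunion (dunion_list Gs) (dunion_list Hs)"
  by (induction Gs) (simp_all add: dunion_assoc)

lemma nverts_dunion_list: "nverts (dunion_list Gs) = (\<Sum>G\<leftarrow>Gs. nverts G)"
  by (induction Gs) (simp_all add: nverts_def[of "(0, [])"])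

lemma nverts_path3 [simp]: "nverts path3 = 3"
  by (simp add: path3_def nverts_def)

lemma nverts_cycle [simp]: "nverts (cycle s) = s"
  by (simp add: cycle_def nverts_def)

lemma nverts_K2 [simp]: "nverts K2 = 2"
  by (simp add: K2_def nverts_def)

lemma wf_mgraph_dunion: "wf_mgraph G \<Longrightarrow> wf_mgraph H \<Longrightarrow> wf_mgraph (dunion G H)"
  by (fastforce simp: wf_mgraph_def shift_edges_def)

definition glue :: "(nat \<Rightarrow> real) \<Rightarrow> nat \<Rightarrow> (nat \<Rightarrow> real) \<Rightarrow> nat \<Rightarrow> real" where
  "glue y n z j = (if j < n then y j else z (j - n))"

lemma glue_const [simp]: "glue (\<lambda>_. c) n (\<lambda>_. c) = (\<lambda>_. c)"
  by (simp add: glue_def fun_eq_iff)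

lemma sum_glue: "(\<Sum>j<n + m. glue y n z j) = (\<Sum>j<n. y j) + (\<Sum>j<m. z j)"
  by (induction m) (simp_all add: glue_def)

text \<open>The apex edge adds y j + 1 to row j, so y extended by 1 at the apex satisfies the
  \<lambda>-eigen-equations of Q(K_1 \<or> H) at all vertices of H.\<close>
definition cone_profile :: "real \<Rightarrow> mgraph \<Rightarrow> (nat \<Rightarrow> real) \<Rightarrow> bool" where
  "cone_profile lam H y \<longleftrightarrow>
     wf_mgraph H \<and> (\<forall>j<nverts H. Q_apply (edges H) y j = (lam - 1) * y j - 1)"

lemma cone_profile_dunion:
  assumes "cone_profile lam G y" "cone_profile lam H z"
  shows "cone_profile lam (dunion G H) (glue y (nverts G) z)"
proof -
  let ?N = "nverts G"
  have EG: "\<forall>(x, y)\<in>set (edges G). x < ?N \<and> y < ?N"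
    using assms(1) by (simp add: cone_profile_def wf_mgraph_def)
  have "Q_apply (edges (dunion G H)) (glue y ?N z) j = (lam - 1) * glue y ?N z j - 1"
    if j: "j < nverts (dunion G H)" for j
  proof (cases "j < ?N")
    case True
    have "Q_apply (edges G) (glue y ?N z) j = Q_apply (edges G) y j"
      by (rule Q_apply_cong[OF EG _ True]) (simp add: glue_def)
    then show ?thesis
      using True assms(1) by (simp add: cone_profile_def Q_apply_shift_edges glue_def)
  next
    case False
    have "(\<lambda>i. glue y ?N z (i + ?N)) = z"
      by (simp add: glue_def fun_eq_iff)
    then show ?thesis
      using False j assms(2) Q_apply_eq_0[OF EG]
      by (simp add: cone_profile_def Q_apply_shift_edges glue_def)
  qed
  then show ?thesis
    using assms by (simp add: cone_profile_def wf_mgraph_dunion)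
qed

lemma cone_profile_dunion_list_const:
  "\<forall>G\<in>set Gs. cone_profile lam G (\<lambda>_. c) \<Longrightarrow> cone_profile lam (dunion_list Gs) (\<lambda>_. c)"
proof (induction Gs)
  case Nil
  then show ?case
    by (simp add: cone_profile_def wf_mgraph_def nverts_def edges_def)
next
  case (Cons G Gs)
  then show ?case
    using cone_profile_dunion[of lam G "\<lambda>_. c" "dunion_list Gs" "\<lambda>_. c"] by simp
qed

lemma cone_profile_K2: "d * (3 - lam) = -1 \<Longrightarrow> cone_profile lam K2 (\<lambda>_. d)"
  unfolding cone_profile_def wf_mgraph_def K2_def nverts_def edges_def
  by (auto simp: algebra_simps less_Suc_eq)

lemma cone_profile_path3:
  "b = (lam - 2) * a - 1 \<Longrightarrow> 2 * a + (3 - lam) * b + 1 = 0 \<Longrightarrow>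
   cone_profile lam path3 (\<lambda>j. if j = 1 then b else a)"
  unfolding cone_profile_def wf_mgraph_def path3_def nverts_def edges_def
  by (auto simp: algebra_simps less_Suc_eq)

lemma Q_apply_cycle_const:
  assumes "2 \<le> s" "j < s"
  shows "Q_apply (edges (cycle s)) (\<lambda>_. c) j = 4 * c"
proof -
  \<comment> \<open>the cyclic predecessor of j; it differs from j since s \<ge> 2 (for s = 2 the two
    edges at j are parallel)\<close>
  define k where "k = (if j = 0 then s - 1 else j - 1)"
  have k: "k < s"
    using assms by (auto simp: k_def)
  have pred: "Suc i mod s = j \<and> i \<noteq> j \<longleftrightarrow> i = k" if "i < s" for i
  proof (cases "Suc i = s")
    case True
    then show ?thesis using assms that by (auto simp: k_def)
  next
    case False
    then have "Suc i mod s = Suc i" using that by simp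
    then show ?thesis using assms that False by (auto simp: k_def)
  qed
  have "Q_apply (edges (cycle s)) (\<lambda>_. c) j =
     (\<Sum>i<s. if i = j then c + c else if Suc i mod s = j then c + c else 0)"
    by (simp add: Q_apply_def cycle_def edges_def sum_set_upt_conv_sum_list_nat[symmetric]
        atLeast0LessThan o_def)
  also have "\<dots> = (\<Sum>i<s. (if i = j then c + c else 0) + (if i = k then c + c else 0))"
    by (rule sum.cong) (use pred in auto)
  also have "\<dots> = 4 * c"
    using assms k by (simp add: sum.distrib)
  finally show ?thesis .
qed

lemma cone_profile_cycle:
  assumes "2 \<le> s" "c * (5 - lam) = -1"
  shows "cone_profile lam (cycle s) (\<lambda>_. c)"
  using Q_apply_cycle_const[OF assms(1)] assms
  by (auto simp: cone_profile_def wf_mgraph_def cycle_def edges_def nverts_def algebra_simps)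

lemma nverts_cone [simp]: "nverts (cone H) = nverts H + 1"
  by (simp add: cone_def nverts_def)

lemma edges_cone: "edges (cone H) = shift_edges 1 (edges H) @ map (\<lambda>i. (0, i + 1)) [0..<nverts H]"
  by (simp add: cone_def edges_def)

lemma wf_mgraph_cone: "wf_mgraph H \<Longrightarrow> wf_mgraph (cone H)"
  by (auto simp: wf_mgraph_def edges_cone shift_edges_def)

lemma Q_apply_star:
  "Q_apply (map (\<lambda>k. (0, Suc k)) [0..<N]) v i =
     (\<Sum>k<N. if i = 0 then v i + v (Suc k) else if Suc k = i then v i + v 0 else 0)"
  by (simp add: Q_apply_def sum_set_upt_conv_sum_list_nat[symmetric] atLeast0LessThan o_def)

lemma Q_apply_cone_apex: "Q_apply (edges (cone H)) v 0 = (\<Sum>k<nverts H. v 0 + v (Suc k))"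
  by (simp add: edges_cone Q_apply_shift_edges Q_apply_star)

lemma Q_apply_cone_Suc:
  assumes "j < nverts H"
  shows "Q_apply (edges (cone H)) v (Suc j) = Q_apply (edges H) (\<lambda>k. v (Suc k)) j + v (Suc j) + v 0"
proof -
  have "(\<Sum>k<nverts H. if Suc j = 0 then v 0 + v (Suc k) else if Suc k = Suc j then v (Suc j) + v 0 else 0)
      = v (Suc j) + v 0"
    using assms by simp
  then show ?thesis
    by (simp add: edges_cone Q_apply_shift_edges Q_apply_star)
qed

lemma eigenvalue_Q_cone:
  assumes profile: "cone_profile lam H y"
    and apex: "real (nverts H) + (\<Sum>j<nverts H. y j) = lam"
  shows "eigenvalue (Q_mat (cone H)) lam"
proof -
  define v where "v i = (if i = 0 then 1 else y (i - 1))" for i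
  have "Q_apply (edges (cone H)) v i = lam * v i" if "i < nverts (cone H)" for i
  proof (cases i)
    case 0
    then show ?thesis
      using apex by (simp add: Q_apply_cone_apex v_def sum.distrib)
  next
    case (Suc j)
    then have "j < nverts H"
      using that by simp
    moreover have "(\<lambda>k. v (Suc k)) = y"
      by (simp add: v_def)
    ultimately show ?thesis
      using profile by (simp add: Q_apply_cone_Suc Suc v_def cone_profile_def algebra_simps)
  qed
  then show ?thesis
    using eigenvalue_Q_matI[of "cone H" v lam 0] wf_mgraph_cone profile
    by (simp add: v_def cone_profile_def)
qed

text \<open>The apex equation times 1 - \<lambda> (see apex_balance_eq), which removes its pole at
  \<lambda> = 1.\<close>
definition apex_balance :: "real \<Rightarrow> real \<Rightarrow> real \<Rightarrow> real" where
  "apex_balance S Q lam = (1 - lam) * (2 - lam) + lam * (2 - lam) / (lam - 4)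
     + (1 - lam) * (S * (4 - lam) / (5 - lam) + Q * (2 - lam) / (3 - lam))"

lemma apex_balance_eq:
  fixes lam S Q a b c d :: real
  assumes "lam < 1"
    and "a = (2 - lam) / ((1 - lam) * (lam - 4))" "b = (lam - 2) * a - 1"
    and "c = -1 / (5 - lam)" "d = -1 / (3 - lam)"
  shows "(1 - lam) * (3 + S + Q + (2 * a + b + S * c + Q * d) - lam) = apex_balance S Q lam"
proof -
  have "(1 - lam) * a = (2 - lam) / (lam - 4)"
    using assms(1,2) by simp
  moreover have "1 + c = (4 - lam) / (5 - lam)" "1 + d = (2 - lam) / (3 - lam)"
    using assms(1,4,5) by (simp_all add: field_simps)
  moreover have "(1 - lam) * (3 + S + Q + (2 * a + b + S * c + Q * d) - lam)
      = (1 - lam) * (2 - lam) + lam * ((1 - lam) * a) + (1 - lam) * (S * (1 + c) + Q * (1 + d))"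
    unfolding assms(3) by (simp add: algebra_simps)
  ultimately show ?thesis
    by (simp add: apex_balance_def)
qed

lemma apex_balance_root:
  assumes "0 \<le> S" "0 \<le> Q"
  obtains lam where "0 < lam" "lam < 1" "apex_balance S Q lam = 0"
proof -
  have "continuous_on {0..1} (apex_balance S Q)"
    unfolding apex_balance_def by (auto intro!: continuous_intros)
  moreover have pos: "apex_balance S Q 0 > 0"
    using assms by (simp add: apex_balance_def add_pos_nonneg)
  moreover have neg: "apex_balance S Q 1 < 0"
    by (simp add: apex_balance_def)
  ultimately obtain lam where "0 \<le> lam" "lam \<le> 1" "apex_balance S Q lam = 0"
    using IVT2'[of "apex_balance S Q" 1 0 0] by force
  moreover from this have "lam \<noteq> 0" "lam \<noteq> 1"
    using pos neg by auto
  ultimately show thesis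
    using that by (simp add: order.strict_iff_order)
qed

lemma eigenvalue_Q_cone_path3_cycles_K2s:
  assumes "\<forall>x\<in>set s. 2 \<le> x" "0 < lam" "lam < 1"
    and "apex_balance (real (sum_list s)) (2 * real q) lam = 0"
  shows "eigenvalue (Q_mat (cone (dunion_list (path3 # map cycle s @ replicate q K2)))) lam"
proof -
  define S where "S = real (sum_list s)"
  define a where "a = (2 - lam) / ((1 - lam) * (lam - 4))"
  define b where "b = (lam - 2) * a - 1"
  define c where "c = -1 / (5 - lam)"
  define d where "d = -1 / (3 - lam)"
  define y where "y = glue (\<lambda>j. if j = 1 then b else a) 3 (glue (\<lambda>_. c) (sum_list s) (\<lambda>_. d))"
  let ?C = "dunion_list (map cycle s)" and ?K = "dunion_list (replicate q K2)"
  let ?H = "dunion path3 (dunion ?C ?K)"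
  have nverts: "nverts ?C = sum_list s" "nverts ?K = 2 * q"
    by (simp_all add: nverts_dunion_list o_def sum_list_replicate)
  have "cone_profile lam ?C (\<lambda>_. c)"
    using assms(1,3) by (auto intro!: cone_profile_dunion_list_const cone_profile_cycle simp: c_def)
  moreover have "cone_profile lam ?K (\<lambda>_. d)"
    using assms(3) by (auto intro!: cone_profile_dunion_list_const cone_profile_K2 simp: d_def)
  moreover have "cone_profile lam path3 (\<lambda>j. if j = 1 then b else a)"
  proof (rule cone_profile_path3[OF b_def])
    have "a * ((1 - lam) * (lam - 4)) = 2 - lam"
      using assms(3) by (simp add: a_def)
    then show "2 * a + (3 - lam) * b + 1 = 0"
      by (simp add: b_def algebra_simps)
  qed
  ultimately have profile: "cone_profile lam ?H y"
    unfolding y_def by (metis cone_profile_dunion nverts(1) nverts_path3)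
  have "(\<Sum>j<nverts ?H. y j) = 2 * a + b + S * c + 2 * real q * d"
    unfolding y_def nverts_dunion nverts_path3 nverts sum_glue
    by (simp add: S_def numeral_3_eq_3 lessThan_Suc)
  moreover have "(1 - lam) * (3 + S + 2 * real q + (2 * a + b + S * c + 2 * real q * d) - lam)
      = apex_balance S (2 * real q) lam"
    using assms(3) a_def b_def c_def d_def by (rule apex_balance_eq)
  ultimately have "real (nverts ?H) + (\<Sum>j<nverts ?H. y j) = lam"
    using assms(3,4) by (simp add: nverts S_def)
  then show ?thesis
    using eigenvalue_Q_cone[OF profile] by (simp add: dunion_list_append)
qed

theorem lemma3p5:
  fixes t q :: nat and s :: "nat list"
  assumes "length s = t"
    and "\<forall>i<t. s ! i \<ge> 2"
  shows "least_eigenvalue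
           (Q_mat (cone (dunion_list (path3 # map cycle s @ replicate q K2)))) < 1"
proof -
  obtain lam where lam: "0 < lam" "lam < 1"
    and root: "apex_balance (real (sum_list s)) (2 * real q) lam = 0"
    using apex_balance_root[of "real (sum_list s)" "2 * real q"] by auto
  have "\<forall>x\<in>set s. 2 \<le> x"
    using assms by (auto simp: in_set_conv_nth)
  then have "eigenvalue (Q_mat (cone (dunion_list (path3 # map cycle s @ replicate q K2)))) lam"
    using lam root by (rule eigenvalue_Q_cone_path3_cycles_K2s)
  then show ?thesis
    using least_eigenvalue_le[OF Q_mat_carrier] lam(2) by fastforce
qed

end
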